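(* Let $\mathcal H$ be a hypergraph and $\mathcal A$ a sub-hypergraph of $\mathcal H$. Suppose that for any $\sigma,\sigma'\in\mathcal H$, either $\sigma\cap\sigma'=\emptyset$ or $\sigma\cap\sigma'\in\mathcal H$; and that for any $\tau\in\mathcal A$ and $\tau'\in\mathcal H\setminus\mathcal A$, $\tau\cap\tau'=\emptyset$. Then for each $n\ge0$, $$H_n(\mathcal H,\mathcal A)\oplus H_n(\mathcal H,\mathcal H\setminus\mathcal A)\cong H_n(\mathcal H).$$
   Context: A hypergraph is a finite set of nonempty finite subsets of a vertex set (hyperedges); an $n$-hyperedge has $n+1$ vertices. $\mathcal H\setminus\mathcal A=\{\sigma\in\mathcal H:\sigma\notin\mathcal A\}$. The associated simplicial complex is $\Delta\mathcal H=\{\sigma\ne\emptyset:\sigma\subseteq\tau\text{ for some }\tau\in\mathcal H\}$. Fix an abelian coefficient group $G$; chains are simplicial chains of $\Delta\mathcal H$ with coefficients in $G$ and boundary $\partial$; $G(\mathcal X)_n$ is the group of $G$-linear combinations of $n$-hyperedges of $\mathcal X$; $\mathrm{Inf}_n(\mathcal X)=G(\mathcal X)_n\cap\partial_n^{-1}(G(\mathcal X)_{n-1})$. Embedded homology $H_n(\mathcal H)=H_n(\mathrm{Inf}_*(\mathcal H))$; relative embedded homology $H_n(\mathcal H,\mathcal A)=H_n(\mathrm{Inf}_*(\mathcal H)/\mathrm{Inf}_*(\mathcal A))$. *)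

theory Defs
  imports Main "HOL-Algebra.Coset"
begin

definition hypergraph :: "'v set set \<Rightarrow> bool" where
  "hypergraph H \<longleftrightarrow> finite H \<and> (\<forall>\<sigma>\<in>H. \<sigma> \<noteq> {} \<and> finite \<sigma>)"

definition assoc_complex :: "'v set set \<Rightarrow> 'v set set" where
  "assoc_complex H = {\<sigma>. \<sigma> \<noteq> {} \<and> (\<exists>\<tau>\<in>H. \<sigma> \<subseteq> \<tau>)}"

text \<open>Simplices are oriented by the linear order on vertices. An n-chain of the
 associated complex is a G-valued function on its n-simplices (finite support is
 automatic since the complex is finite).\<close>

definition chains :: "'v set set \<Rightarrow> nat \<Rightarrow> ('v set \<Rightarrow> 'g::ab_group_add) set" where
  "chains H n = {c. \<forall>\<sigma>. c \<sigma> \<noteq> 0 \<longrightarrow> \<sigma> \<in> assoc_complex H \<and> card \<sigma> = Suc n}"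

definition sgn_scale :: "nat \<Rightarrow> 'g::ab_group_add \<Rightarrow> 'g" where
  "sgn_scale k x = (if even k then x else - x)"

text \<open>Simplicial boundary of an n-chain: removing the i-th vertex (0-based, in
 increasing order) carries the sign (-1)^i. The boundary of a 0-chain is 0.\<close>
definition bd :: "'v::linorder set set \<Rightarrow> nat \<Rightarrow> ('v set \<Rightarrow> 'g::ab_group_add) \<Rightarrow> ('v set \<Rightarrow> 'g)" where
  "bd H n c = (\<lambda>\<tau>. if 0 < n \<and> \<tau> \<in> assoc_complex H \<and> card \<tau> = n
      then (\<Sum>v\<in>\<Union>H - \<tau>. sgn_scale (card {w\<in>\<tau>. w < v}) (c (insert v \<tau>)))
      else 0)"

text \<open>G(X)_n: G-linear combinations of n-hyperedges of X.\<close>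
definition hchains :: "'v set set \<Rightarrow> 'v set set \<Rightarrow> nat \<Rightarrow> ('v set \<Rightarrow> 'g::ab_group_add) set" where
  "hchains H X n = {c \<in> chains H n. \<forall>\<sigma>. c \<sigma> \<noteq> 0 \<longrightarrow> \<sigma> \<in> X}"

text \<open>Inf_n(X) = G(X)_n \<inter> \<partial>_n^{-1}(G(X)_{n-1}); for n = 0 the boundary is 0.\<close>
definition Inf_chains :: "'v::linorder set set \<Rightarrow> 'v set set \<Rightarrow> nat \<Rightarrow> ('v set \<Rightarrow> 'g::ab_group_add) set" where
  "Inf_chains H X n = {c \<in> hchains H X n. bd H n c \<in> hchains H X (n - 1)}"

definition add_grp :: "('a \<Rightarrow> 'g::ab_group_add) set \<Rightarrow> ('a \<Rightarrow> 'g) monoid" where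
  "add_grp S = \<lparr>carrier = S, mult = (\<lambda>f g x. f x + g x), one = (\<lambda>x. 0)\<rparr>"

text \<open>Homology of a chain complex (C_n, d_n : C_n \<rightarrow> C_{n-1}), with C_{-1} = 0:
 the cycle subgroup (kernel of d_n) modulo the image of d_{n+1}.\<close>
definition homology :: "(nat \<Rightarrow> ('a, 'm) monoid_scheme) \<Rightarrow> (nat \<Rightarrow> 'a \<Rightarrow> 'a) \<Rightarrow> nat \<Rightarrow> 'a set monoid" where
  "homology C d n =
     ((C n)\<lparr>carrier := {x \<in> carrier (C n). n = 0 \<or> d n x = \<one>\<^bsub>C (n - 1)\<^esub>}\<rparr>)
       Mod (d (Suc n) ` carrier (C (Suc n)))"

definition embedded_homology :: "'v::linorder set set \<Rightarrow> nat \<Rightarrow> ('v set \<Rightarrow> 'g::ab_group_add) set monoid" where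
  "embedded_homology H n = homology (\<lambda>k. add_grp (Inf_chains H H k)) (bd H) n"

definition quot_chain_grp :: "'v::linorder set set \<Rightarrow> 'v set set \<Rightarrow> nat \<Rightarrow> ('v set \<Rightarrow> 'g::ab_group_add) set monoid" where
  "quot_chain_grp H A n = add_grp (Inf_chains H H n) Mod (Inf_chains H A n)"

definition quot_bd :: "'v::linorder set set \<Rightarrow> 'v set set \<Rightarrow> nat \<Rightarrow> ('v set \<Rightarrow> 'g::ab_group_add) set \<Rightarrow> ('v set \<Rightarrow> 'g) set" where
  "quot_bd H A n q = (Inf_chains H A (n - 1)) #>\<^bsub>add_grp (Inf_chains H H (n - 1))\<^esub> (bd H n (SOME c. c \<in> q))"

definition rel_embedded_homology :: "'v::linorder set set \<Rightarrow> 'v set set \<Rightarrow> nat \<Rightarrow> ('v set \<Rightarrow> 'g::ab_group_add) set set monoid" where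
  "rel_embedded_homology H A n = homology (quot_chain_grp H A) (quot_bd H A) n"

end

theory Submission
  imports Defs
begin

text \<open>If no hyperedge of \<open>A\<close> meets a hyperedge of \<open>H - A\<close>, then no nonempty face lies under
  hyperedges of both sides, so restricting a chain to \<open>A\<close> commutes with the boundary and
  \<open>Inf\<^sub>*(H)\<close> splits as \<open>Inf\<^sub>*(A) \<oplus> Inf\<^sub>*(H - A)\<close>. Send a cycle of \<open>Inf\<^sub>*(H)\<close> to its pair of
  relative classes. The map is onto, because a relative cycle modulo \<open>A\<close> may be replaced by its
  part on \<open>H - A\<close>, which is an honest cycle; and its kernel consists of the boundaries, because
  bounding chains modulo \<open>A\<close> and modulo \<open>H - A\<close> can be cut along \<open>A\<close> and glued. The first
  isomorphism theorem concludes.\<close>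

definition pointwise_subgroup :: "('a \<Rightarrow> 'g::ab_group_add) set \<Rightarrow> bool" where
  "pointwise_subgroup S \<longleftrightarrow>
     (\<lambda>x. 0) \<in> S \<and> (\<forall>f\<in>S. \<forall>g\<in>S. (\<lambda>x. f x + g x) \<in> S) \<and> (\<forall>f\<in>S. (\<lambda>x. - f x) \<in> S)"

lemma add_grp_carrier [simp]: "carrier (add_grp S) = S"
  and add_grp_mult [simp]: "mult (add_grp S) = (\<lambda>f g x. f x + g x)"
  and add_grp_one [simp]: "one (add_grp S) = (\<lambda>x. 0)"
  and add_grp_carrier_update [simp]: "(add_grp S)\<lparr>carrier := T\<rparr> = add_grp T"
  by (simp_all add: add_grp_def)

lemma comm_group_add_grp:
  assumes "pointwise_subgroup S"
  shows "comm_group (add_grp S)"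
proof (rule comm_groupI)
  fix f assume "f \<in> carrier (add_grp S)"
  with assms show "\<exists>g\<in>carrier (add_grp S). g \<otimes>\<^bsub>add_grp S\<^esub> f = \<one>\<^bsub>add_grp S\<^esub>"
    unfolding pointwise_subgroup_def by (intro bexI[of _ "\<lambda>x. - f x"]) auto
qed (use assms in \<open>auto simp: pointwise_subgroup_def add.assoc add.commute\<close>)

lemma inv_add_grp:
  assumes "pointwise_subgroup S" "f \<in> S"
  shows "inv\<^bsub>add_grp S\<^esub> f = (\<lambda>x. - f x)"
proof -
  interpret comm_group "add_grp S" by (rule comm_group_add_grp[OF assms(1)])
  show ?thesis
    using assms by (intro inv_equality) (auto simp: pointwise_subgroup_def)
qed

lemma subgroup_add_grp:
  assumes "pointwise_subgroup S" "pointwise_subgroup T" "T \<subseteq> S"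
  shows "subgroup T (add_grp S)"
proof -
  interpret comm_group "add_grp S" by (rule comm_group_add_grp[OF assms(1)])
  show ?thesis
    using assms by (intro subgroupI) (auto simp: pointwise_subgroup_def inv_add_grp[OF assms(1)])
qed

lemma mem_r_coset_add_grp: "f \<in> M #>\<^bsub>add_grp S\<^esub> g \<longleftrightarrow> (\<exists>h\<in>M. f = (\<lambda>x. h x + g x))"
  by (auto simp: r_coset_def)

section \<open>The boundary operator\<close>

lemma sgn_scale_0 [simp]: "sgn_scale k 0 = 0"
  and sgn_scale_eq_0_iff [simp]: "sgn_scale k x = 0 \<longleftrightarrow> x = 0"
  and sgn_scale_add: "sgn_scale k (x + y) = sgn_scale k x + sgn_scale k y"
  and sgn_scale_minus: "sgn_scale k (- x) = - sgn_scale k x"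
  and sgn_scale_sum: "sgn_scale k (sum f S) = (\<Sum>x\<in>S. sgn_scale k (f x))"
  and sgn_scale_Suc: "sgn_scale k (sgn_scale (Suc l) x) = - sgn_scale l (sgn_scale k x)"
  by (auto simp: sgn_scale_def sum_negf)

lemma bd_add: "bd H n (\<lambda>x. f x + g x) = (\<lambda>x. bd H n f x + bd H n g x)"
  by (auto simp: bd_def sgn_scale_add sum.distrib)

lemma bd_minus: "bd H n (\<lambda>x. - f x) = (\<lambda>x. - bd H n f x)"
  by (auto simp: bd_def sgn_scale_minus sum_negf)

lemma bd_zero [simp]: "bd H n (\<lambda>x. 0) = (\<lambda>x. 0)"
  and bd_0 [simp]: "bd H 0 c = (\<lambda>x. 0)"
  by (auto simp: bd_def)

lemma bd_in_chains: "bd H n c \<in> chains H (n - 1)"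
  by (auto simp: bd_def chains_def)

lemma bd_nonzero_imp_face:
  assumes "bd H n c \<tau> \<noteq> 0"
  shows "0 < n \<and> card \<tau> = n \<and> (\<exists>v. v \<notin> \<tau> \<and> c (insert v \<tau>) \<noteq> 0)"
proof -
  have n: "0 < n \<and> \<tau> \<in> assoc_complex H \<and> card \<tau> = n"
    using assms by (auto simp: bd_def split: if_splits)
  then have "(\<Sum>v\<in>\<Union>H - \<tau>. sgn_scale (card {w\<in>\<tau>. w < v}) (c (insert v \<tau>))) \<noteq> 0"
    using assms by (simp add: bd_def)
  then obtain v where "v \<in> \<Union>H - \<tau>" "sgn_scale (card {w\<in>\<tau>. w < v}) (c (insert v \<tau>)) \<noteq> 0"
    using sum.not_neutral_contains_not_neutral by blast
  then show ?thesis using n by auto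
qed

lemma sum_offdiag_antisym:
  fixes g :: "'a::linorder \<Rightarrow> 'a \<Rightarrow> 'b::ab_group_add"
  assumes "finite U" and antisym: "\<And>v w. v \<in> U \<Longrightarrow> w \<in> U \<Longrightarrow> v < w \<Longrightarrow> g w v = - g v w"
  shows "(\<Sum>v\<in>U. \<Sum>w\<in>U - {v}. g v w) = 0"
proof -
  define P where "P = {(v, w) \<in> U \<times> U. v < w}"
  have fin: "finite P" "finite (prod.swap ` P)"
    using \<open>finite U\<close> by (auto simp: P_def intro: finite_subset[of _ "U \<times> U"])
  have "(\<Sum>v\<in>U. \<Sum>w\<in>U - {v}. g v w) = (\<Sum>p\<in>P \<union> prod.swap ` P. case_prod g p)"
    using \<open>finite U\<close> by (subst sum.Sigma) (auto intro!: sum.cong simp: P_def neq_iff)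
  also have "\<dots> = (\<Sum>p\<in>P. case_prod g p) + (\<Sum>p\<in>P. case_prod g (prod.swap p))"
    using fin by (subst sum.union_disjoint) (auto simp: P_def sum.reindex)
  also have "(\<Sum>p\<in>P. case_prod g (prod.swap p)) = - (\<Sum>p\<in>P. case_prod g p)"
    by (auto simp: P_def antisym sum_negf[symmetric] intro: sum.cong)
  finally show ?thesis by simp
qed

text \<open>The two orders of deleting a pair of vertices carry opposite signs.\<close>

lemma bd_bd:
  assumes fin: "finite (\<Union>H)" and c: "c \<in> chains H (Suc m)"
  shows "bd H m (bd H (Suc m) c) = (\<lambda>_. 0)"
proof
  fix \<tau>
  show "bd H m (bd H (Suc m) c) \<tau> = 0"
  proof (cases "0 < m \<and> \<tau> \<in> assoc_complex H \<and> card \<tau> = m")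
    case False
    then show ?thesis by (auto simp: bd_def)
  next
    case \<tau>: True
    then have "finite \<tau>" using card_ge_0_finite by blast
    define U where "U = \<Union>H - \<tau>"
    define a where "a v = card {x\<in>\<tau>. x < v}" for v
    define g where "g v w = sgn_scale (a v) (sgn_scale (card {x\<in>insert v \<tau>. x < w})
                                               (c (insert w (insert v \<tau>))))" for v w
    have inner: "sgn_scale (a v) (bd H (Suc m) c (insert v \<tau>)) = (\<Sum>w\<in>U - {v}. g v w)"
      if "v \<in> U" for v
    proof (cases "insert v \<tau> \<in> assoc_complex H")
      case True
      moreover have "card (insert v \<tau>) = Suc m" "\<Union>H - insert v \<tau> = U - {v}"
        using that \<tau> \<open>finite \<tau>\<close> by (auto simp: U_def)
      ultimately show ?thesis by (simp add: bd_def g_def sgn_scale_sum)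
    next
      case False
      then have "insert w (insert v \<tau>) \<notin> assoc_complex H" for w
        by (auto simp: assoc_complex_def)
      then have "c (insert w (insert v \<tau>)) = 0" for w
        using c by (auto simp: chains_def)
      then show ?thesis using False by (simp add: bd_def g_def)
    qed
    have antisym: "g w v = - g v w" if "v \<in> U" "w \<in> U" "v < w" for v w
    proof -
      have "{x\<in>insert v \<tau>. x < w} = insert v {x\<in>\<tau>. x < w}" "{x\<in>insert w \<tau>. x < v} = {x\<in>\<tau>. x < v}"
        "insert v (insert w \<tau>) = insert w (insert v \<tau>)"
        using that by (auto simp: U_def)
      moreover have "card (insert v {x\<in>\<tau>. x < w}) = Suc (a w)"
        using that \<open>finite \<tau>\<close> by (simp add: a_def U_def)
      ultimately show ?thesis by (simp add: g_def a_def sgn_scale_Suc)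
    qed
    have "bd H m (bd H (Suc m) c) \<tau> = (\<Sum>v\<in>U. sgn_scale (a v) (bd H (Suc m) c (insert v \<tau>)))"
      using \<tau> by (simp add: bd_def U_def a_def)
    also have "\<dots> = (\<Sum>v\<in>U. \<Sum>w\<in>U - {v}. g v w)"
      by (simp add: inner)
    also have "\<dots> = 0"
      using fin antisym by (intro sum_offdiag_antisym) (auto simp: U_def)
    finally show ?thesis .
  qed
qed

lemma pointwise_subgroup_hchains: "pointwise_subgroup (hchains H X n)"
  unfolding pointwise_subgroup_def hchains_def chains_def
  by auto (metis add.right_neutral)+

lemma pointwise_subgroup_Inf_chains: "pointwise_subgroup (Inf_chains H X n)"
  using pointwise_subgroup_hchains[of H X n] pointwise_subgroup_hchains[of H X "n - 1"]
  unfolding pointwise_subgroup_def Inf_chains_def by (auto simp: bd_add bd_minus)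

lemma zero_in_Inf_chains: "(\<lambda>x. 0) \<in> Inf_chains H X n"
  using pointwise_subgroup_Inf_chains by (auto simp: pointwise_subgroup_def)

lemma add_in_Inf_chains:
  "f \<in> Inf_chains H X n \<Longrightarrow> g \<in> Inf_chains H X n \<Longrightarrow> (\<lambda>x. f x + g x) \<in> Inf_chains H X n"
  by (metis pointwise_subgroup_Inf_chains pointwise_subgroup_def)

lemma Inf_chains_subset_chains: "Inf_chains H X n \<subseteq> chains H n"
  by (auto simp: Inf_chains_def hchains_def)

lemma Inf_chains_mono: "X \<subseteq> Y \<Longrightarrow> Inf_chains H X n \<subseteq> Inf_chains H Y n"
  by (auto simp: Inf_chains_def hchains_def)

lemma Inf_chains_vanish: "c \<in> Inf_chains H X n \<Longrightarrow> \<sigma> \<notin> X \<Longrightarrow> c \<sigma> = 0"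
  by (auto simp: Inf_chains_def hchains_def)

lemma bd_Inf_chains:
  assumes "finite (\<Union>H)" "c \<in> Inf_chains H X n"
  shows "bd H n c \<in> Inf_chains H X (n - 1)"
proof (cases n)
  case 0
  then show ?thesis
    using pointwise_subgroup_Inf_chains[of H X 0] by (auto simp: pointwise_subgroup_def)
next
  case (Suc m)
  have "(\<lambda>x. 0) \<in> hchains H X (m - 1)"
    using pointwise_subgroup_hchains by (auto simp: pointwise_subgroup_def)
  with assms Suc show ?thesis
    by (auto simp: Inf_chains_def hchains_def bd_bd)
qed

section \<open>Homology of chain complexes of abelian groups\<close>

locale abelian_chain_complex =
  fixes C :: "nat \<Rightarrow> ('a, 'm) monoid_scheme" and d :: "nat \<Rightarrow> 'a \<Rightarrow> 'a"
  assumes comm_group_chains: "comm_group (C k)"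
    and hom_bd: "d k \<in> hom (C k) (C (k - 1))"
    and bd_bd_one: "x \<in> carrier (C (Suc (Suc k))) \<Longrightarrow> d (Suc k) (d (Suc (Suc k)) x) = \<one>\<^bsub>C k\<^esub>"
begin

definition cycles :: "nat \<Rightarrow> 'a set" where
  "cycles n = {x \<in> carrier (C n). n = 0 \<or> d n x = \<one>\<^bsub>C (n - 1)\<^esub>}"

definition boundaries :: "nat \<Rightarrow> 'a set" where
  "boundaries n = d (Suc n) ` carrier (C (Suc n))"

abbreviation cycle_grp :: "nat \<Rightarrow> ('a, 'm) monoid_scheme" where
  "cycle_grp n \<equiv> (C n)\<lparr>carrier := cycles n\<rparr>"

definition homology_class :: "nat \<Rightarrow> 'a \<Rightarrow> 'a set" where
  "homology_class n x = boundaries n #>\<^bsub>cycle_grp n\<^esub> x"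

lemma homology_eq: "homology C d n = cycle_grp n Mod boundaries n"
  by (simp add: homology_def cycles_def boundaries_def)

lemma group_hom_bd: "group_hom (C k) (C (k - 1)) (d k)"
  using comm_group_chains hom_bd
  by (intro group_hom.intro group_hom_axioms.intro) (auto dest: comm_group.axioms(2))

lemma subgroup_cycles: "subgroup (cycles n) (C n)"
proof (cases n)
  case 0
  then show ?thesis
    using comm_group.axioms(2)[OF comm_group_chains] group.subgroup_self
    by (fastforce simp: cycles_def)
next
  case (Suc m)
  then have "cycles n = kernel (C n) (C (n - 1)) (d n)"
    by (auto simp: cycles_def kernel_def)
  then show ?thesis using group_hom.subgroup_kernel[OF group_hom_bd] by simp
qed

lemma subgroup_boundaries: "subgroup (boundaries n) (C n)"
  using group_hom.img_is_subgroup[OF group_hom_bd[of "Suc n"]] by (simp add: boundaries_def)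

lemma boundaries_subset_cycles: "boundaries n \<subseteq> cycles n"
  using hom_bd[of "Suc n"] bd_bd_one
  by (cases n) (auto simp: boundaries_def cycles_def hom_def)

lemma comm_group_cycle_grp: "comm_group (cycle_grp n)"
proof -
  interpret comm_group "C n" by (rule comm_group_chains)
  show ?thesis
    using subgroup.subgroup_is_group[OF subgroup_cycles is_group]
    by (rule group.group_comm_groupI) (auto intro: m_comm dest: subgroup.mem_carrier[OF subgroup_cycles])
qed

lemma normal_boundaries: "boundaries n \<lhd> cycle_grp n"
proof -
  interpret comm_group "C n" by (rule comm_group_chains)
  have "subgroup (boundaries n) (cycle_grp n)"
    by (rule subgroup_incl[OF subgroup_boundaries subgroup_cycles boundaries_subset_cycles])
  then show ?thesis by (rule comm_group.subgroup_imp_normal[OF comm_group_cycle_grp])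
qed

lemma carrier_homology: "carrier (homology C d n) = homology_class n ` cycles n"
  by (auto simp: homology_eq carrier_FactGroup RCOSETS_def homology_class_def)

lemma group_homology: "group (homology C d n)"
  unfolding homology_eq by (rule normal.factorgroup_is_group[OF normal_boundaries])

lemma hom_homology_class: "homology_class n \<in> hom (cycle_grp n) (homology C d n)"
  unfolding homology_eq homology_class_def by (rule normal.r_coset_hom_Mod[OF normal_boundaries])

lemma homology_class_eq_one_iff:
  assumes "x \<in> cycles n"
  shows "homology_class n x = \<one>\<^bsub>homology C d n\<^esub> \<longleftrightarrow> x \<in> boundaries n"
proof -
  interpret group "cycle_grp n" using comm_group_cycle_grp comm_group.axioms(2) by blast
  have "subgroup (boundaries n) (cycle_grp n)" using normal_boundaries normal_imp_subgroup by blast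
  then show ?thesis
    using assms coset_join1[of "boundaries n" x] coset_join2[of x "boundaries n"]
    by (auto simp: homology_eq homology_class_def)
qed

end

lemma Inf_chain_complex:
  assumes "finite (\<Union>H)"
  shows "abelian_chain_complex (\<lambda>k. add_grp (Inf_chains H H k)) (bd H)"
proof (rule abelian_chain_complex.intro)
  show "comm_group (add_grp (Inf_chains H H k))" for k
    by (rule comm_group_add_grp[OF pointwise_subgroup_Inf_chains])
  show "bd H k \<in> hom (add_grp (Inf_chains H H k)) (add_grp (Inf_chains H H (k - 1)))" for k
    using bd_Inf_chains[OF assms] by (intro homI) (auto simp: bd_add)
  show "bd H (Suc k) (bd H (Suc (Suc k)) c) = \<one>\<^bsub>add_grp (Inf_chains H H k)\<^esub>"
    if "c \<in> carrier (add_grp (Inf_chains H H (Suc (Suc k))))" for k c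
    using that bd_bd[OF assms, of c "Suc k"] by (simp add: Inf_chains_def hchains_def)
qed

section \<open>The relative complex\<close>

abbreviation Inf_grp :: "'v::linorder set set \<Rightarrow> nat \<Rightarrow> ('v set \<Rightarrow> 'g::ab_group_add) monoid" where
  "Inf_grp H k \<equiv> add_grp (Inf_chains H H k)"

locale subhypergraph =
  fixes H X :: "'v::linorder set set"
  assumes hypergraph: "hypergraph H" and subset: "X \<subseteq> H"
begin

lemma finite_vertices: "finite (\<Union>H)"
  using hypergraph by (auto simp: hypergraph_def)

lemma subgroup_Inf_chains: "subgroup (Inf_chains H X k) (Inf_grp H k)"
  using subset by (intro subgroup_add_grp pointwise_subgroup_Inf_chains Inf_chains_mono)

lemma comm_group_quot_chain_grp: "comm_group (quot_chain_grp H X k)"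
  unfolding quot_chain_grp_def
  by (rule comm_group.abelian_FactGroup[OF comm_group_add_grp[OF pointwise_subgroup_Inf_chains] subgroup_Inf_chains])

lemma carrier_quot_chain_grp:
  "carrier (quot_chain_grp H X k) = (\<lambda>c. Inf_chains H X k #>\<^bsub>Inf_grp H k\<^esub> c) ` Inf_chains H H k"
  by (simp add: quot_chain_grp_def carrier_FactGroup)

lemma one_quot_chain_grp [simp]: "\<one>\<^bsub>quot_chain_grp H X k\<^esub> = Inf_chains H X k"
  by (simp add: quot_chain_grp_def)

lemma rcos_add_Inf_chains:
  fixes c e :: "'v set \<Rightarrow> 'g::ab_group_add"
  assumes "e \<in> Inf_chains H X k" "c \<in> Inf_chains H H k"
  shows "Inf_chains H X k #>\<^bsub>Inf_grp H k\<^esub> (\<lambda>x. e x + c x) = Inf_chains H X k #>\<^bsub>Inf_grp H k\<^esub> c"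
proof -
  interpret comm_group "Inf_grp H k :: ('v set \<Rightarrow> 'g) monoid"
    by (rule comm_group_add_grp[OF pointwise_subgroup_Inf_chains])
  have "(\<lambda>x. e x + c x) \<in> Inf_chains H X k #>\<^bsub>Inf_grp H k\<^esub> c"
    using assms(1) by (auto simp: mem_r_coset_add_grp)
  then show ?thesis
    using repr_independence[OF _ _ subgroup_Inf_chains] assms(2) by simp
qed

lemma self_in_rcos: "c \<in> Inf_chains H X k #>\<^bsub>Inf_grp H k\<^esub> c"
  unfolding mem_r_coset_add_grp by (intro bexI[OF _ zero_in_Inf_chains]) simp

lemma rcos_eq_iff:
  fixes b c :: "'v set \<Rightarrow> 'g::ab_group_add"
  assumes "b \<in> Inf_chains H H k"
  shows "Inf_chains H X k #>\<^bsub>Inf_grp H k\<^esub> c = Inf_chains H X k #>\<^bsub>Inf_grp H k\<^esub> b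
           \<longleftrightarrow> (\<exists>e\<in>Inf_chains H X k. c = (\<lambda>x. e x + b x))"
  using self_in_rcos[of c] rcos_add_Inf_chains[OF _ assms] by (auto simp: mem_r_coset_add_grp)

lemma rcos_zero: "Inf_chains H X k #>\<^bsub>Inf_grp H k\<^esub> (\<lambda>x. 0 :: 'g::ab_group_add) = Inf_chains H X k"
  by (simp add: r_coset_def)

lemma rcos_eq_Inf_chains_iff:
  fixes c :: "'v set \<Rightarrow> 'g::ab_group_add"
  shows "Inf_chains H X k #>\<^bsub>Inf_grp H k\<^esub> c = Inf_chains H X k \<longleftrightarrow> c \<in> Inf_chains H X k"
  using rcos_eq_iff[OF zero_in_Inf_chains, of k c] by (simp add: rcos_zero)

lemma quot_bd_rcos:
  fixes c :: "'v set \<Rightarrow> 'g::ab_group_add"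
  assumes c: "c \<in> Inf_chains H H n"
  shows "quot_bd H X n (Inf_chains H X n #>\<^bsub>Inf_grp H n\<^esub> c)
           = Inf_chains H X (n - 1) #>\<^bsub>Inf_grp H (n - 1)\<^esub> bd H n c"
proof -
  let ?q = "Inf_chains H X n #>\<^bsub>Inf_grp H n\<^esub> c"
  have "(SOME c. c \<in> ?q) \<in> ?q" by (rule someI[of "\<lambda>x. x \<in> ?q", OF self_in_rcos])
  then obtain e where e: "e \<in> Inf_chains H X n" and "(SOME c. c \<in> ?q) = (\<lambda>x. e x + c x)"
    unfolding mem_r_coset_add_grp by blast
  then have "bd H n (SOME c. c \<in> ?q) = (\<lambda>x. bd H n e x + bd H n c x)"
    by (simp add: bd_add)
  moreover have "bd H n e \<in> Inf_chains H X (n - 1)" "bd H n c \<in> Inf_chains H H (n - 1)"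
    using bd_Inf_chains[OF finite_vertices] e c by auto
  ultimately show ?thesis
    unfolding quot_bd_def by (simp add: rcos_add_Inf_chains)
qed

lemma rcos_mult:
  fixes c c' :: "'v set \<Rightarrow> 'g::ab_group_add"
  assumes "c \<in> Inf_chains H H n" "c' \<in> Inf_chains H H n"
  shows "(Inf_chains H X n #>\<^bsub>Inf_grp H n\<^esub> c)
            \<otimes>\<^bsub>quot_chain_grp H X n\<^esub> (Inf_chains H X n #>\<^bsub>Inf_grp H n\<^esub> c')
           = Inf_chains H X n #>\<^bsub>Inf_grp H n\<^esub> (\<lambda>x. c x + c' x)"
proof -
  interpret normal "Inf_chains H X n" "Inf_grp H n :: ('v set \<Rightarrow> 'g) monoid"
    by (rule comm_group.subgroup_imp_normal[OF comm_group_add_grp[OF pointwise_subgroup_Inf_chains] subgroup_Inf_chains])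
  show ?thesis using rcos_sum assms by (simp add: quot_chain_grp_def)
qed

lemma rel_chain_complex:
  "abelian_chain_complex (quot_chain_grp H X :: nat \<Rightarrow> ('v set \<Rightarrow> 'g::ab_group_add) set monoid) (quot_bd H X)"
proof (rule abelian_chain_complex.intro)
  let ?Q = "quot_chain_grp H X :: nat \<Rightarrow> ('v set \<Rightarrow> 'g) set monoid"
  have quot_elem: "\<exists>c\<in>Inf_chains H H k. q = Inf_chains H X k #>\<^bsub>Inf_grp H k\<^esub> c"
    if "q \<in> carrier (?Q k)" for q k
    using that by (auto simp: carrier_quot_chain_grp)
  show "comm_group (?Q k)" for k
    by (rule comm_group_quot_chain_grp)
  show "quot_bd H X k \<in> hom (?Q k) (?Q (k - 1))" for k
  proof (rule homI)
    fix q assume "q \<in> carrier (?Q k)"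
    then show "quot_bd H X k q \<in> carrier (?Q (k - 1))"
      using quot_elem bd_Inf_chains[OF finite_vertices] by (force simp: quot_bd_rcos carrier_quot_chain_grp)
  next
    fix q q' assume "q \<in> carrier (?Q k)" "q' \<in> carrier (?Q k)"
    then obtain c c' where c: "c \<in> Inf_chains H H k" "q = Inf_chains H X k #>\<^bsub>Inf_grp H k\<^esub> c"
      and c': "c' \<in> Inf_chains H H k" "q' = Inf_chains H X k #>\<^bsub>Inf_grp H k\<^esub> c'"
      using quot_elem by meson
    moreover have "(\<lambda>x. c x + c' x) \<in> Inf_chains H H k"
      using c c' by (simp add: add_in_Inf_chains)
    moreover have "bd H k c \<in> Inf_chains H H (k - 1)" "bd H k c' \<in> Inf_chains H H (k - 1)"
      using bd_Inf_chains[OF finite_vertices] c c' by auto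
    ultimately show "quot_bd H X k (q \<otimes>\<^bsub>?Q k\<^esub> q') = quot_bd H X k q \<otimes>\<^bsub>?Q (k - 1)\<^esub> quot_bd H X k q'"
      by (simp only: rcos_mult quot_bd_rcos bd_add)
  qed
  show "quot_bd H X (Suc k) (quot_bd H X (Suc (Suc k)) q) = \<one>\<^bsub>?Q k\<^esub>"
    if q: "q \<in> carrier (?Q (Suc (Suc k)))" for k q
  proof -
    obtain c where c: "c \<in> Inf_chains H H (Suc (Suc k))"
      and q_eq: "q = Inf_chains H X (Suc (Suc k)) #>\<^bsub>Inf_grp H (Suc (Suc k))\<^esub> c"
      using quot_elem[OF q] by blast
    have "bd H (Suc (Suc k)) c \<in> Inf_chains H H (Suc k)"
      using bd_Inf_chains[OF finite_vertices c] by simp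
    moreover have "bd H (Suc k) (bd H (Suc (Suc k)) c) = (\<lambda>x. 0)"
      using bd_bd[OF finite_vertices] c Inf_chains_subset_chains by blast
    ultimately show ?thesis
      using c by (simp add: q_eq quot_bd_rcos rcos_zero quot_chain_grp_def)
  qed
qed

sublocale Inf: abelian_chain_complex "\<lambda>k. Inf_grp H k" "bd H"
  by (rule Inf_chain_complex[OF finite_vertices])

sublocale rel: abelian_chain_complex "quot_chain_grp H X" "quot_bd H X"
  by (rule rel_chain_complex)

definition rel_class :: "nat \<Rightarrow> ('v set \<Rightarrow> 'g::ab_group_add) \<Rightarrow> ('v set \<Rightarrow> 'g) set set" where
  "rel_class n c = rel.homology_class n (Inf_chains H X n #>\<^bsub>Inf_grp H n\<^esub> c)"

lemma Inf_cycles_eq: "Inf.cycles n = {c \<in> Inf_chains H H n. bd H n c = (\<lambda>x. 0)}"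
  by (auto simp: Inf.cycles_def)

lemma rel_cycles_eq:
  "(rel.cycles n :: ('v set \<Rightarrow> 'g::ab_group_add) set set)
     = (\<lambda>c. Inf_chains H X n #>\<^bsub>Inf_grp H n\<^esub> c)
         ` {c \<in> Inf_chains H H n. n = 0 \<or> bd H n c \<in> Inf_chains H X (n - 1)}"
proof -
  have "quot_bd H X n (Inf_chains H X n #>\<^bsub>Inf_grp H n\<^esub> c) = Inf_chains H X (n - 1)
          \<longleftrightarrow> bd H n c \<in> Inf_chains H X (n - 1)" if "c \<in> Inf_chains H H n" for c :: "'v set \<Rightarrow> 'g"
    using that by (simp add: quot_bd_rcos rcos_eq_Inf_chains_iff)
  then show ?thesis by (auto simp: rel.cycles_def carrier_quot_chain_grp)
qed

lemma rel_boundaries_eq: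
  "rel.boundaries n = (\<lambda>d. Inf_chains H X n #>\<^bsub>Inf_grp H n\<^esub> bd H (Suc n) d) ` Inf_chains H H (Suc n)"
  by (auto simp: rel.boundaries_def carrier_quot_chain_grp quot_bd_rcos image_image)

lemma carrier_rel_embedded_homology:
  "carrier (rel_embedded_homology H X n)
     = rel_class n ` {c \<in> Inf_chains H H n. n = 0 \<or> bd H n c \<in> Inf_chains H X (n - 1)}"
  by (auto simp: rel_embedded_homology_def rel.carrier_homology rel_cycles_eq rel_class_def)

lemma hom_rel_class:
  "rel_class n \<in> hom (add_grp (Inf.cycles n) :: ('v set \<Rightarrow> 'g::ab_group_add) monoid) (rel_embedded_homology H X n)"
proof -
  have "(\<lambda>c. Inf_chains H X n #>\<^bsub>Inf_grp H n\<^esub> c)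
          \<in> hom (add_grp (Inf.cycles n) :: ('v set \<Rightarrow> 'g) monoid) (rel.cycle_grp n)"
  proof (rule homI)
    fix c :: "'v set \<Rightarrow> 'g" assume "c \<in> carrier (add_grp (Inf.cycles n))"
    then show "Inf_chains H X n #>\<^bsub>Inf_grp H n\<^esub> c \<in> carrier (rel.cycle_grp n)"
      by (auto simp: Inf_cycles_eq rel_cycles_eq zero_in_Inf_chains)
  next
    fix c c' :: "'v set \<Rightarrow> 'g" assume "c \<in> carrier (add_grp (Inf.cycles n))" "c' \<in> carrier (add_grp (Inf.cycles n))"
    then show "Inf_chains H X n #>\<^bsub>Inf_grp H n\<^esub> (c \<otimes>\<^bsub>add_grp (Inf.cycles n)\<^esub> c')
        = (Inf_chains H X n #>\<^bsub>Inf_grp H n\<^esub> c)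
            \<otimes>\<^bsub>rel.cycle_grp n\<^esub> (Inf_chains H X n #>\<^bsub>Inf_grp H n\<^esub> c')"
      by (simp add: Inf_cycles_eq rcos_mult)
  qed
  from hom_compose[OF this rel.hom_homology_class] show ?thesis
    by (simp add: rel_embedded_homology_def rel_class_def[abs_def] comp_def)
qed

lemma rel_class_eq_one_iff:
  fixes c :: "'v set \<Rightarrow> 'g::ab_group_add"
  assumes "c \<in> Inf.cycles n"
  shows "rel_class n c = \<one>\<^bsub>rel_embedded_homology H X n\<^esub>
           \<longleftrightarrow> (\<exists>d\<in>Inf_chains H H (Suc n). \<exists>e\<in>Inf_chains H X n. c = (\<lambda>x. e x + bd H (Suc n) d x))"
proof -
  have "Inf_chains H X n #>\<^bsub>Inf_grp H n\<^esub> c \<in> rel.cycles n"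
    using assms by (auto simp: Inf_cycles_eq rel_cycles_eq zero_in_Inf_chains)
  then have "rel_class n c = \<one>\<^bsub>rel_embedded_homology H X n\<^esub>
               \<longleftrightarrow> (\<exists>d\<in>Inf_chains H H (Suc n).
                     Inf_chains H X n #>\<^bsub>Inf_grp H n\<^esub> c = Inf_chains H X n #>\<^bsub>Inf_grp H n\<^esub> bd H (Suc n) d)"
    by (auto simp: rel_class_def rel_embedded_homology_def rel.homology_class_eq_one_iff rel_boundaries_eq)
  also have "\<dots> \<longleftrightarrow> (\<exists>d\<in>Inf_chains H H (Suc n). \<exists>e\<in>Inf_chains H X n.
                        c = (\<lambda>x. e x + bd H (Suc n) d x))"
    using bd_Inf_chains[OF finite_vertices] by (intro bex_cong refl rcos_eq_iff) fastforce
  finally show ?thesis .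
qed

lemma rel_class_add_Inf_chains:
  fixes c e :: "'v set \<Rightarrow> 'g::ab_group_add"
  assumes "e \<in> Inf_chains H X n" "c \<in> Inf_chains H H n"
  shows "rel_class n (\<lambda>x. e x + c x) = rel_class n c"
  using rcos_add_Inf_chains[OF assms] by (simp add: rel_class_def)

end

section \<open>Separated sub-hypergraphs\<close>

definition restrict_chain :: "'v set set \<Rightarrow> ('v set \<Rightarrow> 'g::ab_group_add) \<Rightarrow> 'v set \<Rightarrow> 'g" where
  "restrict_chain X c = (\<lambda>\<sigma>. if \<sigma> \<in> X then c \<sigma> else 0)"

lemma restrict_chain_add:
  "restrict_chain X (\<lambda>x. f x + g x) = (\<lambda>x. restrict_chain X f x + restrict_chain X g x)"
  by (auto simp: restrict_chain_def)

lemma restrict_chain_decomp: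
  assumes "c \<in> Inf_chains H H n" "X \<subseteq> H"
  shows "c = (\<lambda>x. restrict_chain X c x + restrict_chain (H - X) c x)"
  using assms Inf_chains_vanish[OF assms(1)] by (auto simp: restrict_chain_def)

lemma restrict_chain_vanish:
  "e \<in> Inf_chains H Y n \<Longrightarrow> X \<inter> Y = {} \<Longrightarrow> restrict_chain X e = (\<lambda>x. 0)"
  using Inf_chains_vanish by (fastforce simp: restrict_chain_def)

lemma bd_nonzero_imp_coface:
  assumes "\<forall>\<sigma>. c \<sigma> \<noteq> 0 \<longrightarrow> \<sigma> \<in> Y" "bd H n c \<tau> \<noteq> 0"
  shows "\<tau> \<noteq> {} \<and> (\<exists>\<sigma>\<in>Y. \<tau> \<subseteq> \<sigma>)"
  using bd_nonzero_imp_face[OF assms(2)] assms(1) by (metis card.empty less_irrefl subset_insertI)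

locale separated = subhypergraph H X for H X :: "'v::linorder set set" +
  assumes disjoint: "\<forall>\<tau>\<in>X. \<forall>\<tau>'\<in>H - X. \<tau> \<inter> \<tau>' = {}"
begin

lemma separated_complement: "separated H (H - X)"
  using hypergraph subset disjoint by unfold_locales auto

lemma no_common_face:
  "\<tau> \<noteq> {} \<Longrightarrow> \<tau> \<subseteq> \<sigma> \<Longrightarrow> \<sigma> \<in> X \<Longrightarrow> \<tau> \<subseteq> \<sigma>' \<Longrightarrow> \<sigma>' \<in> H - X \<Longrightarrow> False"
  using disjoint by blast

text \<open>No nonempty face lies under hyperedges on both sides of the separation, so the
  boundaries of the two parts of a chain have disjoint supports.\<close>

lemma bd_restrict_chain:
  fixes c :: "'v set \<Rightarrow> 'g::ab_group_add"
  assumes c: "c \<in> Inf_chains H H n"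
  shows "bd H n (restrict_chain X c) = restrict_chain X (bd H n c)"
proof
  fix \<tau>
  let ?cX = "restrict_chain X c" and ?cY = "restrict_chain (H - X) c"
  have split: "bd H n c \<tau> = bd H n ?cX \<tau> + bd H n ?cY \<tau>"
    by (subst restrict_chain_decomp[OF c subset]) (simp add: bd_add)
  have "\<forall>\<sigma>. ?cX \<sigma> \<noteq> 0 \<longrightarrow> \<sigma> \<in> X" "\<forall>\<sigma>. ?cY \<sigma> \<noteq> 0 \<longrightarrow> \<sigma> \<in> H - X"
    by (simp_all add: restrict_chain_def)
  note X_coface = bd_nonzero_imp_coface[OF this(1)] and Y_coface = bd_nonzero_imp_coface[OF this(2)]
  show "bd H n ?cX \<tau> = restrict_chain X (bd H n c) \<tau>"
  proof (cases "\<tau> \<in> X")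
    case True
    then have "bd H n ?cY \<tau> = 0" using Y_coface no_common_face by blast
    with True split show ?thesis by (simp add: restrict_chain_def)
  next
    case False
    have "bd H n ?cX \<tau> = 0"
    proof (rule ccontr)
      assume nz: "bd H n ?cX \<tau> \<noteq> 0"
      then have "bd H n ?cY \<tau> = 0" using X_coface Y_coface no_common_face by blast
      with nz split have "bd H n c \<tau> \<noteq> 0" by simp
      then have "\<tau> \<in> H" using Inf_chains_vanish[OF bd_Inf_chains[OF finite_vertices c]] by blast
      with False nz X_coface no_common_face show False by blast
    qed
    with False show ?thesis by (simp add: restrict_chain_def)
  qed
qed

lemma restrict_chain_Inf_chains:
  fixes c :: "'v set \<Rightarrow> 'g::ab_group_add"
  assumes c: "c \<in> Inf_chains H H n"
  shows "restrict_chain X c \<in> Inf_chains H X n"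
proof -
  have restrict: "restrict_chain X c' \<in> hchains H X k" if "c' \<in> chains H k" for c' :: "'v set \<Rightarrow> 'g" and k
    using that by (auto simp: restrict_chain_def hchains_def chains_def)
  have "c \<in> chains H n" using c Inf_chains_subset_chains by blast
  with restrict[OF this] restrict[OF bd_in_chains] show ?thesis
    by (simp add: Inf_chains_def bd_restrict_chain[OF c])
qed

lemma rel_class_complement_rep:
  fixes Y :: "('v set \<Rightarrow> 'g::ab_group_add) set set"
  assumes "Y \<in> carrier (rel_embedded_homology H X n)"
  shows "\<exists>c\<in>Inf.cycles n. c \<in> Inf_chains H (H - X) n \<and> rel_class n c = Y"
proof -
  interpret C: separated H "H - X" by (rule separated_complement)
  obtain a where a: "a \<in> Inf_chains H H n" "n = 0 \<or> bd H n a \<in> Inf_chains H X (n - 1)"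
    and Y: "Y = rel_class n a"
    using assms by (auto simp: carrier_rel_embedded_homology)
  define c where "c = restrict_chain (H - X) a"
  have c_Inf: "c \<in> Inf_chains H (H - X) n"
    unfolding c_def by (rule C.restrict_chain_Inf_chains[OF a(1)])
  have "bd H n c = (\<lambda>x. 0)"
    using a(2) C.bd_restrict_chain[OF a(1)] restrict_chain_vanish[of _ H X "n - 1" "H - X"]
    by (auto simp: c_def)
  with c_Inf have "c \<in> Inf.cycles n"
    using Inf_chains_mono[of "H - X" H] by (auto simp: Inf_cycles_eq)
  moreover have "rel_class n a = rel_class n c"
    using rel_class_add_Inf_chains[OF restrict_chain_Inf_chains[OF a(1)], of c]
      restrict_chain_decomp[OF a(1) subset] c_Inf Inf_chains_mono[of "H - X" H]
    by (auto simp: c_def)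
  ultimately show ?thesis using c_Inf Y by blast
qed

lemma restrict_chain_boundary:
  fixes c e :: "'v set \<Rightarrow> 'g::ab_group_add"
  assumes "d \<in> Inf_chains H H (Suc n)" "e \<in> Inf_chains H (H - X) n"
    and "c = (\<lambda>x. e x + bd H (Suc n) d x)"
  shows "restrict_chain X c = bd H (Suc n) (restrict_chain X d)"
proof -
  have "restrict_chain X e = (\<lambda>x. 0)" using restrict_chain_vanish[OF assms(2)] by blast
  then show ?thesis
    using bd_restrict_chain[OF assms(1)] by (simp add: assms(3) restrict_chain_add)
qed

end

locale separated_pair =
  fixes H A :: "'v::linorder set set"
  assumes separated: "separated H A"
begin

sublocale A: separated H A
  by (rule separated)

sublocale B: separated H "H - A"
  by (rule separated.separated_complement[OF separated])

lemma complement_complement [simp]: "H - (H - A) = A"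
  using A.subset by blast

abbreviation rel_class_pair ::
    "nat \<Rightarrow> ('v set \<Rightarrow> 'g::ab_group_add) \<Rightarrow> ('v set \<Rightarrow> 'g) set set \<times> ('v set \<Rightarrow> 'g) set set" where
  "rel_class_pair n c \<equiv> (A.rel_class n c, B.rel_class n c)"

lemma group_hom_rel_class_pair:
  "group_hom (add_grp (A.Inf.cycles n))
     (rel_embedded_homology H A n \<times>\<times> rel_embedded_homology H (H - A) n)
     (rel_class_pair n :: ('v set \<Rightarrow> 'g::ab_group_add) \<Rightarrow> _)"
proof (intro group_hom.intro group_hom_axioms.intro DirProd_group)
  show "group (add_grp (A.Inf.cycles n) :: ('v set \<Rightarrow> 'g) monoid)"
    by (rule comm_group.axioms(2)) (use A.Inf.comm_group_cycle_grp[of n] in simp)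
  show "group (rel_embedded_homology H A n :: ('v set \<Rightarrow> 'g) set set monoid)"
    "group (rel_embedded_homology H (H - A) n :: ('v set \<Rightarrow> 'g) set set monoid)"
    by (simp_all add: rel_embedded_homology_def A.rel.group_homology B.rel.group_homology)
  show "rel_class_pair n \<in> hom (add_grp (A.Inf.cycles n))
          (rel_embedded_homology H A n \<times>\<times> rel_embedded_homology H (H - A) n :: (_ \<times> ('v set \<Rightarrow> 'g) set set) monoid)"
    by (simp add: hom_paired A.hom_rel_class B.hom_rel_class)
qed

text \<open>A pair of relative classes is realised by the sum of a cycle on \<open>H - A\<close> and a cycle on \<open>A\<close>.\<close>

lemma rel_class_pair_surj:
  "rel_class_pair n ` carrier (add_grp (A.Inf.cycles n))
     = carrier (rel_embedded_homology H A n \<times>\<times> rel_embedded_homology H (H - A) n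
                  :: (_ \<times> ('v set \<Rightarrow> 'g::ab_group_add) set set) monoid)"
proof
  show "rel_class_pair n ` carrier (add_grp (A.Inf.cycles n))
          \<subseteq> carrier (rel_embedded_homology H A n \<times>\<times> rel_embedded_homology H (H - A) n)"
    by (rule image_subsetI, rule group_hom.hom_closed[OF group_hom_rel_class_pair])
next
  show "carrier (rel_embedded_homology H A n \<times>\<times> rel_embedded_homology H (H - A) n)
          \<subseteq> rel_class_pair n ` carrier (add_grp (A.Inf.cycles n) :: ('v set \<Rightarrow> 'g) monoid)"
  proof (clarsimp)
    fix Y1 Y2 :: "('v set \<Rightarrow> 'g) set set"
    assume Y1: "Y1 \<in> carrier (rel_embedded_homology H A n)"
      and Y2: "Y2 \<in> carrier (rel_embedded_homology H (H - A) n)"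
    obtain c1 where c1: "c1 \<in> A.Inf.cycles n" "c1 \<in> Inf_chains H (H - A) n" "A.rel_class n c1 = Y1"
      using A.rel_class_complement_rep[OF Y1] by blast
    obtain c2 where c2: "c2 \<in> A.Inf.cycles n" "c2 \<in> Inf_chains H A n" "B.rel_class n c2 = Y2"
      using B.rel_class_complement_rep[OF Y2] by auto
    have cI: "c1 \<in> Inf_chains H H n" "c2 \<in> Inf_chains H H n"
      using c1(1) c2(1) by (simp_all add: A.Inf_cycles_eq)
    have "(\<lambda>x. c1 x + c2 x) \<in> A.Inf.cycles n"
      using c1(1) c2(1) by (simp add: A.Inf_cycles_eq add_in_Inf_chains bd_add)
    moreover have "A.rel_class n (\<lambda>x. c1 x + c2 x) = Y1"
      using A.rel_class_add_Inf_chains[OF c2(2) cI(1)] c1(3) by (simp add: add.commute)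
    moreover have "B.rel_class n (\<lambda>x. c1 x + c2 x) = Y2"
      using B.rel_class_add_Inf_chains[OF c1(2) cI(2)] c2(3) by simp
    ultimately show "(Y1, Y2) \<in> rel_class_pair n ` A.Inf.cycles n"
      by (intro image_eqI[of _ _ "\<lambda>x. c1 x + c2 x"]) simp_all
  qed
qed

text \<open>If a cycle is a boundary modulo \<open>A\<close> and modulo \<open>H - A\<close>, the \<open>A\<close>-part of a
  bounding chain of the second and the \<open>(H - A)\<close>-part of one of the first bound it outright.\<close>

lemma kernel_rel_class_pair:
  "kernel (add_grp (A.Inf.cycles n))
      (rel_embedded_homology H A n \<times>\<times> rel_embedded_homology H (H - A) n) (rel_class_pair n)
     = (A.Inf.boundaries n :: ('v set \<Rightarrow> 'g::ab_group_add) set)"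
proof (intro equalityI subsetI)
  fix c :: "'v set \<Rightarrow> 'g"
  assume "c \<in> kernel (add_grp (A.Inf.cycles n))
             (rel_embedded_homology H A n \<times>\<times> rel_embedded_homology H (H - A) n) (rel_class_pair n)"
  then have c: "c \<in> A.Inf.cycles n" "A.rel_class n c = \<one>\<^bsub>rel_embedded_homology H A n\<^esub>"
    "B.rel_class n c = \<one>\<^bsub>rel_embedded_homology H (H - A) n\<^esub>"
    by (auto simp: kernel_def)
  obtain d1 e1 where d1: "d1 \<in> Inf_chains H H (Suc n)" "e1 \<in> Inf_chains H A n"
    "c = (\<lambda>x. e1 x + bd H (Suc n) d1 x)"
    using A.rel_class_eq_one_iff[OF c(1)] c(2) by blast
  obtain d2 e2 where d2: "d2 \<in> Inf_chains H H (Suc n)" "e2 \<in> Inf_chains H (H - A) n"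
    "c = (\<lambda>x. e2 x + bd H (Suc n) d2 x)"
    using B.rel_class_eq_one_iff[OF c(1)] c(3) by blast
  define d where "d = (\<lambda>x. restrict_chain A d2 x + restrict_chain (H - A) d1 x)"
  have "restrict_chain A d2 \<in> Inf_chains H H (Suc n)" "restrict_chain (H - A) d1 \<in> Inf_chains H H (Suc n)"
    using A.restrict_chain_Inf_chains[OF d2(1)] B.restrict_chain_Inf_chains[OF d1(1)]
      Inf_chains_mono[OF A.subset] Inf_chains_mono[OF B.subset] by blast+
  then have "d \<in> Inf_chains H H (Suc n)"
    by (simp add: d_def add_in_Inf_chains)
  moreover have "restrict_chain A c = bd H (Suc n) (restrict_chain A d2)"
    by (rule A.restrict_chain_boundary[OF d2])
  moreover have "restrict_chain (H - A) c = bd H (Suc n) (restrict_chain (H - A) d1)"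
    by (rule B.restrict_chain_boundary[OF d1(1) _ d1(3)]) (simp add: d1(2))
  moreover have "c = (\<lambda>x. restrict_chain A c x + restrict_chain (H - A) c x)"
    using c(1) A.subset by (intro restrict_chain_decomp) (auto simp: A.Inf_cycles_eq)
  ultimately have "d \<in> Inf_chains H H (Suc n) \<and> c = bd H (Suc n) d"
    by (simp add: d_def bd_add)
  then show "c \<in> A.Inf.boundaries n"
    by (auto simp: A.Inf.boundaries_def)
next
  fix c :: "'v set \<Rightarrow> 'g"
  assume "c \<in> A.Inf.boundaries n"
  then obtain d where d: "d \<in> Inf_chains H H (Suc n)" "c = bd H (Suc n) d"
    by (auto simp: A.Inf.boundaries_def)
  have "c \<in> A.Inf.cycles n"
    using \<open>c \<in> A.Inf.boundaries n\<close> A.Inf.boundaries_subset_cycles by blast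
  moreover have "\<exists>d\<in>Inf_chains H H (Suc n). \<exists>e\<in>Inf_chains H Y n. c = (\<lambda>x. e x + bd H (Suc n) d x)" for Y
    by (intro bexI[OF _ d(1)] bexI[OF _ zero_in_Inf_chains]) (simp add: d(2))
  ultimately show "c \<in> kernel (add_grp (A.Inf.cycles n))
             (rel_embedded_homology H A n \<times>\<times> rel_embedded_homology H (H - A) n) (rel_class_pair n)"
    by (simp add: kernel_def A.rel_class_eq_one_iff B.rel_class_eq_one_iff)
qed

lemma homology_iso_rel_class_pair:
  "add_grp (A.Inf.cycles n :: ('v set \<Rightarrow> 'g::ab_group_add) set) Mod A.Inf.boundaries n
     \<cong> (rel_embedded_homology H A n :: ('v set \<Rightarrow> 'g) set set monoid)
         \<times>\<times> (rel_embedded_homology H (H - A) n :: ('v set \<Rightarrow> 'g) set set monoid)"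
  by (rule group_hom.FactGroup_iso[OF group_hom_rel_class_pair rel_class_pair_surj, unfolded kernel_rel_class_pair])

end

theorem mainTheorem12:
  fixes H A :: "'v::linorder set set" and n :: nat
  assumes "hypergraph H"
    and "A \<subseteq> H"
    and "\<forall>\<sigma>\<in>H. \<forall>\<sigma>'\<in>H. \<sigma> \<inter> \<sigma>' = {} \<or> \<sigma> \<inter> \<sigma>' \<in> H"
    and "\<forall>\<tau>\<in>A. \<forall>\<tau>'\<in>H - A. \<tau> \<inter> \<tau>' = {}"
  shows "((rel_embedded_homology H A n :: ('v set \<Rightarrow> 'g::ab_group_add) set set monoid)
             \<times>\<times> (rel_embedded_homology H (H - A) n :: ('v set \<Rightarrow> 'g) set set monoid))
           \<cong> (embedded_homology H n :: ('v set \<Rightarrow> 'g) set monoid)"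
proof -
  interpret separated_pair H A
    using assms(1,2,4) by unfold_locales auto
  have "embedded_homology H n = add_grp (A.Inf.cycles n :: ('v set \<Rightarrow> 'g) set) Mod A.Inf.boundaries n"
    by (simp add: embedded_homology_def A.Inf.homology_eq)
  moreover have "group (embedded_homology H n :: ('v set \<Rightarrow> 'g) set monoid)"
    by (simp add: embedded_homology_def A.Inf.group_homology)
  ultimately show ?thesis
    using group.iso_sym homology_iso_rel_class_pair by metis
qed

end
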